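(* Consider a discounted Markov decision process with Borel state space $\mathcal{S}$, action sets $\mathcal{A}(s)$, transition kernel $P(\cdot\mid\alpha,s)$, bounded reward $r(\alpha,s)$, and discount factor $\beta\in(0,1)$; fix $\tau\in(0,1)$ and a stationary policy $\pi(\cdot\mid s)$. Let $\mathcal{T}^{\tau}_{\pi}$ and $\mathcal{T}^{\tau}_{*}$ be the operators on bounded functions $V:\mathcal{S}\to\mathbb{R}$ given by $$(\mathcal{T}^{\tau}_{\pi}V)(s)=Q_{\tau}\big[r(\alpha,s)+\beta V(s')\,\big|\,s\big],\ \alpha\sim\pi(\cdot\mid s),\ s'\sim P(\cdot\mid\alpha,s),$$ $$(\mathcal{T}^{\tau}_{*}V)(s)=\max_{\alpha\in\mathcal{A}(s)}Q_{\tau}\big[r(\alpha,s)+\beta V(s')\,\big|\,s\big],\ s'\sim P(\cdot\mid\alpha,s).$$ Then $\mathcal{T}^{\tau}_{\pi}$ and $\mathcal{T}^{\tau}_{*}$ admit unique fixed points $v^{\tau}_{\pi}$ and $v^{\tau}_{*}$ (among bounded functions), and for any bounded initial $V_0$ the iterations $V_{k+1}=\mathcal{T}^{\tau}_{\pi}V_k$ and $V_{k+1}=\mathcal{T}^{\tau}_{*}V_k$ converge in $\|\cdot\|_\infty$ to $v^{\tau}_{\pi}$ and $v^{\tau}_{*}$ respectively.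
   Context: For a real random variable $Z$ with CDF $F_Z$, $Q_\tau[Z]=\inf\{x\in\mathbb{R}: F_Z(x)\ge\tau\}$; $Q_\tau[\,\cdot\mid s]$ is the $\tau$-quantile of the conditional law given the current state $s$. The operators are taken to be well defined, mapping bounded (measurable) functions to bounded (measurable) functions, with the maximum over $\mathcal{A}(s)$ attained. $\|f\|_\infty=\sup_{s}|f(s)|$. *)

theory Defs
  imports "HOL-Probability.Probability"
begin

definition quantile :: "real measure \<Rightarrow> real \<Rightarrow> real" where
  "quantile \<mu> \<tau> = Inf {x. measure \<mu> {..x} \<ge> \<tau>}"

definition bmeas :: "('s::topological_space \<Rightarrow> real) set" where
  "bmeas = {V. V \<in> borel_measurable borel \<and> bounded (range V)}"

definition supdist :: "('s \<Rightarrow> real) \<Rightarrow> ('s \<Rightarrow> real) \<Rightarrow> real" where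
  "supdist f g = (SUP s. \<bar>f s - g s\<bar>)"

definition law_pi ::
  "('s \<Rightarrow> 'a measure) \<Rightarrow> ('a \<Rightarrow> 's::topological_space \<Rightarrow> 's measure) \<Rightarrow> ('a \<Rightarrow> 's \<Rightarrow> real)
    \<Rightarrow> real \<Rightarrow> ('s \<Rightarrow> real) \<Rightarrow> 's \<Rightarrow> real measure" where
  "law_pi \<pi> P r \<beta> V s =
     bind (\<pi> s) (\<lambda>\<alpha>. distr (P \<alpha> s) borel (\<lambda>s'. r \<alpha> s + \<beta> * V s'))"

definition law_act ::
  "('a \<Rightarrow> 's::topological_space \<Rightarrow> 's measure) \<Rightarrow> ('a \<Rightarrow> 's \<Rightarrow> real)
    \<Rightarrow> real \<Rightarrow> ('s \<Rightarrow> real) \<Rightarrow> 'a \<Rightarrow> 's \<Rightarrow> real measure" where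
  "law_act P r \<beta> V \<alpha> s = distr (P \<alpha> s) borel (\<lambda>s'. r \<alpha> s + \<beta> * V s')"

definition T_pi where
  "T_pi \<pi> P r \<beta> \<tau> V = (\<lambda>s. quantile (law_pi \<pi> P r \<beta> V s) \<tau>)"

text \<open>Quantile optimality operator (the maximum over A(s), assumed attained, equals the Sup).\<close>
definition T_star where
  "T_star Acts P r \<beta> \<tau> V = (\<lambda>s. SUP \<alpha>\<in>Acts s. quantile (law_act P r \<beta> V \<alpha> s) \<tau>)"

end

theory Submission imports Defs begin

text \<open>
  Both operators are \<beta>-contractions for the sup-distance on bounded measurable functions.
  The key fact is that quantiles commute with shifts: if \<open>V \<le> W + c\<close> pointwise, then
  \<open>r(\<alpha>,s) + \<beta> V(s')\<close> is dominated by \<open>r(\<alpha>,s) + \<beta> W(s') + \<beta> c\<close> sample by sample, so the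
  distribution function of the first law lies above that of the second shifted by \<open>\<beta> c\<close>, and
  the left \<open>\<tau>\<close>-quantile moves by at most \<open>\<beta> c\<close>. This survives mixing over \<open>\<alpha> \<sim> \<pi>(\<cdot>|s)\<close> and
  maximising over \<open>\<alpha> \<in> \<A>(s)\<close>. Banach's fixed point argument on the bounded measurable functions
  (complete, since uniform limits of measurable functions are measurable) then gives the unique
  fixed points and the geometric convergence of value iteration.
\<close>

section \<open>Contractions on bounded measurable functions\<close>

lemma LIMSEQ_geometric_bound:
  fixes u :: "nat \<Rightarrow> real"
  assumes "0 \<le> \<beta>" "\<beta> < 1" and bound: "\<And>k. \<bar>u k - l\<bar> \<le> C * \<beta> ^ k"
  shows "u \<longlonglongrightarrow> l"
proof -
  have "(\<lambda>k. C * \<beta> ^ k) \<longlonglongrightarrow> 0"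
    using assms(1,2) by (intro tendsto_mult_right_zero LIMSEQ_power_zero) auto
  then have "(\<lambda>k. u k - l) \<longlonglongrightarrow> 0"
    by (rule Lim_null_comparison[rotated]) (simp add: bound)
  then show ?thesis
    by (simp add: LIM_zero_cancel)
qed

lemma geometric_increments_limit:
  fixes u :: "nat \<Rightarrow> real"
  assumes "0 \<le> \<beta>" "\<beta> < 1" and increments: "\<And>k. \<bar>u (Suc k) - u k\<bar> \<le> B * \<beta> ^ k"
  shows "u \<longlonglongrightarrow> lim u" and "\<bar>lim u - u k\<bar> \<le> B / (1 - \<beta>) * \<beta> ^ k"
proof -
  define d where "d i = u (Suc i) - u i" for i
  have geometric: "summable (\<lambda>n. C * \<beta> ^ n)" for C
    using assms(1,2) by (intro summable_mult summable_geometric) auto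
  have d: "summable d"
    by (rule summable_comparison_test'[OF geometric[of B]]) (simp add: d_def increments)
  have partial_sums: "u k = u 0 + (\<Sum>i<k. d i)" for k
    unfolding d_def by (simp add: sum_lessThan_telescope)
  have "(\<lambda>k. u 0 + (\<Sum>i<k. d i)) \<longlonglongrightarrow> u 0 + suminf d"
    by (intro tendsto_add tendsto_const summable_LIMSEQ d)
  then have "u \<longlonglongrightarrow> u 0 + suminf d"
    by (simp add: partial_sums[symmetric])
  then show "u \<longlonglongrightarrow> lim u"
    by (simp add: limI)
  then have "lim u - u k = (\<Sum>n. d (n + k))"
    using suminf_split_initial_segment[OF d, of k] \<open>u \<longlonglongrightarrow> u 0 + suminf d\<close>
    by (simp add: partial_sums[of k] limI)
  also have "\<bar>\<dots>\<bar> \<le> (\<Sum>n. B * \<beta> ^ k * \<beta> ^ n)"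
  proof (rule norm_suminf_le[where 'a = real, unfolded real_norm_def])
    show "\<bar>d (n + k)\<bar> \<le> B * \<beta> ^ k * \<beta> ^ n" for n
      using increments[of "n + k"] by (simp add: d_def power_add ac_simps)
  qed (rule geometric)
  also have "\<dots> = B / (1 - \<beta>) * \<beta> ^ k"
    using assms(1,2) by (simp add: suminf_mult suminf_geometric summable_geometric)
  finally show "\<bar>lim u - u k\<bar> \<le> B / (1 - \<beta>) * \<beta> ^ k" .
qed

lemma funpow_fixpoint: "f x = x \<Longrightarrow> (f ^^ n) x = x"
  by (induction n) auto

lemma bmeas_diff_bounded:
  assumes "V \<in> bmeas" "W \<in> bmeas"
  obtains c where "\<And>s. \<bar>V s - W s\<bar> \<le> c"
proof -
  obtain a b where a: "\<And>s. \<bar>V s\<bar> \<le> a" and b: "\<And>s. \<bar>W s\<bar> \<le> b"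
    using assms unfolding bmeas_def bounded_iff by (auto simp: real_norm_def)
  have "\<bar>V s - W s\<bar> \<le> a + b" for s
    using a[of s] b[of s] by linarith
  then show thesis by (rule that)
qed

lemma abs_supdist_le:
  assumes "\<And>s. \<bar>f s - g s\<bar> \<le> c"
  shows "\<bar>supdist f g\<bar> \<le> c"
proof -
  have "bdd_above (range (\<lambda>s. \<bar>f s - g s\<bar>))"
    using assms by (intro bdd_aboveI2) auto
  then have "0 \<le> supdist f g"
    unfolding supdist_def by (rule cSUP_upper2[OF _ UNIV_I]) simp
  moreover have "supdist f g \<le> c"
    unfolding supdist_def using assms by (intro cSUP_least) auto
  ultimately show ?thesis by simp
qed

locale bmeas_contraction =
  fixes T :: "('s::topological_space \<Rightarrow> real) \<Rightarrow> 's \<Rightarrow> real" and \<beta> :: real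
  assumes beta: "0 \<le> \<beta>" "\<beta> < 1"
    and maps_bmeas: "\<And>V. V \<in> bmeas \<Longrightarrow> T V \<in> bmeas"
    and contraction: "\<And>V W c s. V \<in> bmeas \<Longrightarrow> W \<in> bmeas \<Longrightarrow> (\<And>s. \<bar>V s - W s\<bar> \<le> c)
      \<Longrightarrow> \<bar>T V s - T W s\<bar> \<le> \<beta> * c"
begin

lemma funpow_bmeas: "V \<in> bmeas \<Longrightarrow> (T ^^ k) V \<in> bmeas"
  by (induction k) (auto intro: maps_bmeas)

lemma funpow_contraction:
  assumes "V \<in> bmeas" "W \<in> bmeas" "\<And>s. \<bar>V s - W s\<bar> \<le> c"
  shows "\<bar>(T ^^ k) V s - (T ^^ k) W s\<bar> \<le> c * \<beta> ^ k"
proof (induction k arbitrary: s)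
  case 0
  show ?case using assms(3) by simp
next
  case (Suc k)
  have "\<bar>T ((T ^^ k) V) s - T ((T ^^ k) W) s\<bar> \<le> \<beta> * (c * \<beta> ^ k)"
    using assms(1,2) by (intro contraction funpow_bmeas Suc.IH)
  then show ?case by (simp add: ac_simps)
qed

lemma fixpoint_exists:
  obtains v where "v \<in> bmeas" "T v = v"
proof -
  define Z :: "'s \<Rightarrow> real" where "Z = (\<lambda>_. 0)"
  define U where "U k = (T ^^ k) Z" for k
  have Z: "Z \<in> bmeas"
    by (simp add: Z_def bmeas_def)
  then have U: "U k \<in> bmeas" for k
    unfolding U_def by (rule funpow_bmeas)
  obtain B where B: "\<And>s. \<bar>T Z s - Z s\<bar> \<le> B"
    using bmeas_diff_bounded[OF maps_bmeas[OF Z] Z] by blast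
  have increments: "\<bar>U (Suc k) s - U k s\<bar> \<le> B * \<beta> ^ k" for k s
    using funpow_contraction[OF maps_bmeas[OF Z] Z B, of k s]
    unfolding U_def funpow_Suc_right comp_apply .
  define v where "v s = lim (\<lambda>k. U k s)" for s
  have U_lim: "(\<lambda>k. U k s) \<longlonglongrightarrow> v s" for s
    unfolding v_def by (rule geometric_increments_limit(1)[OF beta]) (rule increments)
  have close: "\<bar>U k s - v s\<bar> \<le> B / (1 - \<beta>) * \<beta> ^ k" for k s
    unfolding v_def by (subst abs_minus_commute) (rule geometric_increments_limit(2)[OF beta increments])
  have "v \<in> borel_measurable borel"
  proof (rule borel_measurable_LIMSEQ_real)
    show "(\<lambda>k. U k s) \<longlonglongrightarrow> v s" for s
      by (rule U_lim)
    show "U k \<in> borel_measurable borel" for k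
      using U[of k] by (simp add: bmeas_def)
  qed
  moreover have "\<bar>v s\<bar> \<le> B / (1 - \<beta>)" for s
    using close[of 0 s] by (simp add: U_def Z_def)
  ultimately have v: "v \<in> bmeas"
    unfolding bmeas_def bounded_iff by auto
  have "T v s = v s" for s
  proof (rule LIMSEQ_unique)
    show "(\<lambda>k. U (Suc k) s) \<longlonglongrightarrow> v s"
      using U_lim by (rule LIMSEQ_Suc)
    have "\<bar>T (U k) s - T v s\<bar> \<le> \<beta> * (B / (1 - \<beta>) * \<beta> ^ k)" for k
      using U v close by (rule contraction)
    then have "\<bar>U (Suc k) s - T v s\<bar> \<le> \<beta> * (B / (1 - \<beta>)) * \<beta> ^ k" for k
      by (simp add: U_def mult.assoc)
    then show "(\<lambda>k. U (Suc k) s) \<longlonglongrightarrow> T v s"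
      by (rule LIMSEQ_geometric_bound[OF beta])
  qed
  then have "T v = v"
    by (rule ext)
  with v show thesis
    by (rule that)
qed

lemma iterates_geometric_bound:
  assumes "V0 \<in> bmeas" "v \<in> bmeas" "T v = v"
  obtains c where "\<And>k s. \<bar>(T ^^ k) V0 s - v s\<bar> \<le> c * \<beta> ^ k"
proof -
  obtain c where c: "\<And>s. \<bar>V0 s - v s\<bar> \<le> c"
    using bmeas_diff_bounded[OF assms(1,2)] by blast
  then have "\<bar>(T ^^ k) V0 s - v s\<bar> \<le> c * \<beta> ^ k" for k s
    using funpow_contraction[OF assms(1,2) c, of k s] funpow_fixpoint[of T v, OF assms(3)] by simp
  then show thesis
    by (rule that)
qed

theorem unique_fixpoint_and_convergence:
  "\<exists>v\<in>bmeas. T v = v \<and> (\<forall>w\<in>bmeas. T w = w \<longrightarrow> w = v)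
     \<and> (\<forall>V0\<in>bmeas. (\<lambda>k. supdist ((T ^^ k) V0) v) \<longlonglongrightarrow> 0)"
proof -
  obtain v where v: "v \<in> bmeas" "T v = v"
    by (rule fixpoint_exists)
  show ?thesis
  proof (intro bexI[OF _ v(1)] conjI ballI impI)
    show "T v = v"
      by (rule v(2))
  next
    fix w assume w: "w \<in> bmeas" "T w = w"
    show "w = v"
    proof
      fix s
      obtain c where c: "\<And>k s. \<bar>(T ^^ k) w s - v s\<bar> \<le> c * \<beta> ^ k"
        using iterates_geometric_bound[OF w(1) v] by blast
      have "\<bar>w s - v s\<bar> \<le> c * \<beta> ^ k" for k
        using c[of k] funpow_fixpoint[of T w, OF w(2)] by simp
      then have "(\<lambda>k. w s) \<longlonglongrightarrow> v s"
        by (rule LIMSEQ_geometric_bound[OF beta])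
      then show "w s = v s"
        by (simp add: LIMSEQ_const_iff)
    qed
  next
    fix V0 :: "'s \<Rightarrow> real" assume V0: "V0 \<in> bmeas"
    obtain c where "\<And>k s. \<bar>(T ^^ k) V0 s - v s\<bar> \<le> c * \<beta> ^ k"
      using iterates_geometric_bound[OF V0 v] by blast
    then have "\<bar>supdist ((T ^^ k) V0) v - 0\<bar> \<le> c * \<beta> ^ k" for k
      by (simp add: abs_supdist_le)
    then show "(\<lambda>k. supdist ((T ^^ k) V0) v) \<longlonglongrightarrow> 0"
      by (rule LIMSEQ_geometric_bound[OF beta])
  qed
qed

end

section \<open>Quantiles under shifts\<close>

lemma (in real_distribution) quantile_level_set_nonempty:
  assumes "\<tau> < 1"
  shows "{x. \<tau> \<le> measure M {..x}} \<noteq> {}"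
proof -
  have "\<forall>\<^sub>F x in at_top. \<tau> < cdf M x"
    using order_tendstoD(1)[OF cdf_lim_at_top_prob] assms by simp
  then obtain x where "\<tau> < cdf M x"
    by (auto simp: eventually_at_top_linorder)
  then show ?thesis
    unfolding cdf_def by (auto intro!: exI[of _ x])
qed

lemma (in real_distribution) quantile_level_set_bdd_below:
  assumes "0 < \<tau>"
  shows "bdd_below {x. \<tau> \<le> measure M {..x}}"
proof -
  have "\<forall>\<^sub>F x in at_bot. cdf M x < \<tau>"
    using order_tendstoD(2)[OF cdf_lim_at_bot] assms by simp
  then obtain a where "\<And>x. x \<le> a \<Longrightarrow> cdf M x < \<tau>"
    by (auto simp: eventually_at_bot_linorder)
  then have "a \<le> x" if "\<tau> \<le> measure M {..x}" for x
    using that unfolding cdf_def by (metis linorder_le_cases not_less)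
  then show ?thesis
    by (auto intro: bdd_belowI[of _ a])
qed

lemma quantile_le_shift:
  assumes \<mu>: "real_distribution \<mu>" and \<nu>: "real_distribution \<nu>" and "0 < \<tau>" "\<tau> < 1"
    and cdf_shift: "\<And>x. emeasure \<nu> {..x} \<le> emeasure \<mu> {..x + d}"
  shows "quantile \<mu> \<tau> \<le> quantile \<nu> \<tau> + d"
proof -
  have measure_shift: "measure \<nu> {..x} \<le> measure \<mu> {..x + d}" for x
    using cdf_shift[of x] \<mu> \<nu>
    by (simp add: real_distribution_def prob_space_def finite_measure.emeasure_eq_measure)
  have "quantile \<mu> \<tau> - d \<le> x" if "\<tau> \<le> measure \<nu> {..x}" for x
  proof -
    have "quantile \<mu> \<tau> \<le> x + d"
      unfolding quantile_def using that measure_shift[of x]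
      by (intro cInf_lower real_distribution.quantile_level_set_bdd_below[OF \<mu>]) (auto simp: \<open>0 < \<tau>\<close>)
    then show ?thesis by simp
  qed
  then have "quantile \<mu> \<tau> - d \<le> quantile \<nu> \<tau>"
    unfolding quantile_def[of \<nu>]
    by (intro cInf_greatest real_distribution.quantile_level_set_nonempty[OF \<nu> \<open>\<tau> < 1\<close>]) auto
  then show ?thesis by simp
qed

lemma emeasure_distr_atMost_shift:
  fixes f g :: "'a \<Rightarrow> real"
  assumes f: "f \<in> borel_measurable M" and g: "g \<in> borel_measurable M"
    and le: "\<And>y. y \<in> space M \<Longrightarrow> f y \<le> g y + d"
  shows "emeasure (distr M borel g) {..x} \<le> emeasure (distr M borel f) {..x + d}"
proof -
  have "g -` {..x} \<inter> space M \<subseteq> f -` {..x + d} \<inter> space M"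
  proof
    fix y assume "y \<in> g -` {..x} \<inter> space M"
    then show "y \<in> f -` {..x + d} \<inter> space M"
      using le[of y] by auto
  qed
  then show ?thesis
    using f g by (simp add: emeasure_distr emeasure_mono measurable_sets)
qed

lemma cSUP_le_cSUP_plus:
  fixes f g :: "'a \<Rightarrow> real"
  assumes "A \<noteq> {}" "bdd_above (g ` A)" "\<And>x. x \<in> A \<Longrightarrow> f x \<le> g x + d"
  shows "(SUP x\<in>A. f x) \<le> (SUP x\<in>A. g x) + d"
proof (rule cSUP_least[OF \<open>A \<noteq> {}\<close>])
  fix x assume "x \<in> A"
  then have "g x \<le> (SUP x\<in>A. g x)"
    using assms(2) by (rule cSUP_upper)
  then show "f x \<le> (SUP x\<in>A. g x) + d"
    using assms(3)[OF \<open>x \<in> A\<close>] by linarith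
qed

section \<open>The quantile Bellman operators\<close>

locale quantile_mdp =
  fixes Am :: "'a measure" and P :: "'a \<Rightarrow> 's::topological_space \<Rightarrow> 's measure"
    and r :: "'a \<Rightarrow> 's \<Rightarrow> real" and \<beta> \<tau> :: real
  assumes kernel: "\<And>s. (\<lambda>\<alpha>. P \<alpha> s) \<in> Am \<rightarrow>\<^sub>M prob_algebra borel"
    and r_measurable: "\<And>s. (\<lambda>\<alpha>. r \<alpha> s) \<in> borel_measurable Am"
    and beta_nonneg: "0 \<le> \<beta>" and tau: "0 < \<tau>" "\<tau> < 1"
begin

lemma borel_measurable_transition:
  assumes "\<alpha> \<in> space Am" "V \<in> borel_measurable borel"
  shows "V \<in> borel_measurable (P \<alpha> s)"
proof -
  have "sets (P \<alpha> s) = sets borel"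
    using measurable_space[OF kernel assms(1)] by (simp add: space_prob_algebra)
  then show ?thesis
    using assms(2) measurable_cong_sets by blast
qed

lemma real_distribution_law_act:
  assumes "\<alpha> \<in> space Am" "V \<in> borel_measurable borel"
  shows "real_distribution (law_act P r \<beta> V \<alpha> s)"
proof -
  have "prob_space (P \<alpha> s)"
    using measurable_space[OF kernel assms(1)] by (simp add: space_prob_algebra)
  moreover have "(\<lambda>s'. r \<alpha> s + \<beta> * V s') \<in> borel_measurable (P \<alpha> s)"
    using borel_measurable_transition[OF assms] by simp
  ultimately show ?thesis
    unfolding law_act_def real_distribution_def real_distribution_axioms_def
    by (simp add: prob_space.prob_space_distr)
qed

lemma law_act_measurable:
  assumes V: "V \<in> borel_measurable borel"
  shows "(\<lambda>\<alpha>. law_act P r \<beta> V \<alpha> s) \<in> Am \<rightarrow>\<^sub>M prob_algebra borel"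
proof (rule measurable_prob_algebraI)
  show "prob_space (law_act P r \<beta> V \<alpha> s)" if "\<alpha> \<in> space Am" for \<alpha>
    using real_distribution_law_act[OF that V] by (simp add: real_distribution_def)
  have "(\<lambda>(\<alpha>, s'). r \<alpha> s + \<beta> * V s') \<in> borel_measurable (Am \<Otimes>\<^sub>M borel)"
    using r_measurable V by measurable
  then show "(\<lambda>\<alpha>. law_act P r \<beta> V \<alpha> s) \<in> Am \<rightarrow>\<^sub>M subprob_algebra borel"
    unfolding law_act_def using measurable_distr2 measurable_prob_algebraD[OF kernel] by blast
qed

lemma law_act_atMost_shift:
  assumes \<alpha>: "\<alpha> \<in> space Am" and V: "V \<in> borel_measurable borel" and W: "W \<in> borel_measurable borel"
    and le: "\<And>s'. V s' \<le> W s' + c"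
  shows "emeasure (law_act P r \<beta> W \<alpha> s) {..x} \<le> emeasure (law_act P r \<beta> V \<alpha> s) {..x + \<beta> * c}"
  unfolding law_act_def
proof (rule emeasure_distr_atMost_shift)
  show "(\<lambda>s'. r \<alpha> s + \<beta> * V s') \<in> borel_measurable (P \<alpha> s)"
    using borel_measurable_transition[OF \<alpha> V] by simp
  show "(\<lambda>s'. r \<alpha> s + \<beta> * W s') \<in> borel_measurable (P \<alpha> s)"
    using borel_measurable_transition[OF \<alpha> W] by simp
  show "r \<alpha> s + \<beta> * V s' \<le> r \<alpha> s + \<beta> * W s' + \<beta> * c" for s'
    using mult_left_mono[OF le beta_nonneg] by (simp add: algebra_simps)
qed

lemma T_star_le_shift:
  assumes V: "V \<in> borel_measurable borel" and W: "W \<in> borel_measurable borel"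
    and acts: "Acts s \<subseteq> space Am" "Acts s \<noteq> {}"
    and bdd: "bdd_above ((\<lambda>\<alpha>. quantile (law_act P r \<beta> W \<alpha> s) \<tau>) ` Acts s)"
    and le: "\<And>s'. V s' \<le> W s' + c"
  shows "T_star Acts P r \<beta> \<tau> V s \<le> T_star Acts P r \<beta> \<tau> W s + \<beta> * c"
  unfolding T_star_def
proof (rule cSUP_le_cSUP_plus[OF acts(2) bdd])
  fix \<alpha> assume "\<alpha> \<in> Acts s"
  then have "\<alpha> \<in> space Am" using acts(1) by blast
  then show "quantile (law_act P r \<beta> V \<alpha> s) \<tau> \<le> quantile (law_act P r \<beta> W \<alpha> s) \<tau> + \<beta> * c"
    using V W le tau by (intro quantile_le_shift real_distribution_law_act law_act_atMost_shift)
qed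

lemma T_star_contraction:
  assumes V: "V \<in> borel_measurable borel" and W: "W \<in> borel_measurable borel"
    and acts: "Acts s \<subseteq> space Am" "Acts s \<noteq> {}"
    and bdd_V: "bdd_above ((\<lambda>\<alpha>. quantile (law_act P r \<beta> V \<alpha> s) \<tau>) ` Acts s)"
    and bdd_W: "bdd_above ((\<lambda>\<alpha>. quantile (law_act P r \<beta> W \<alpha> s) \<tau>) ` Acts s)"
    and close: "\<And>s'. \<bar>V s' - W s'\<bar> \<le> c"
  shows "\<bar>T_star Acts P r \<beta> \<tau> V s - T_star Acts P r \<beta> \<tau> W s\<bar> \<le> \<beta> * c"
proof -
  have le: "V s' \<le> W s' + c" "W s' \<le> V s' + c" for s'
    using close[of s'] by linarith+
  have "T_star Acts P r \<beta> \<tau> V s \<le> T_star Acts P r \<beta> \<tau> W s + \<beta> * c"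
    by (rule T_star_le_shift[where Acts = Acts, OF V W acts bdd_W le(1)])
  moreover have "T_star Acts P r \<beta> \<tau> W s \<le> T_star Acts P r \<beta> \<tau> V s + \<beta> * c"
    by (rule T_star_le_shift[where Acts = Acts, OF W V acts bdd_V le(2)])
  ultimately show ?thesis
    by (simp add: abs_le_iff)
qed

end

locale quantile_mdp_policy = quantile_mdp Am P r \<beta> \<tau>
  for Am :: "'a measure" and P :: "'a \<Rightarrow> 's::topological_space \<Rightarrow> 's measure" and r \<beta> \<tau> +
  fixes \<pi> :: "'s \<Rightarrow> 'a measure"
  assumes policy: "\<And>s. prob_space (\<pi> s)" "\<And>s. sets (\<pi> s) = sets Am"
begin

lemma law_pi_as_bind: "law_pi \<pi> P r \<beta> V s = \<pi> s \<bind> (\<lambda>\<alpha>. law_act P r \<beta> V \<alpha> s)"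
  unfolding law_pi_def law_act_def ..

lemma policy_in_prob_algebra: "\<pi> s \<in> space (prob_algebra (\<pi> s))"
  using policy by (simp add: space_prob_algebra)

lemma law_act_measurable_policy:
  "V \<in> borel_measurable borel \<Longrightarrow> (\<lambda>\<alpha>. law_act P r \<beta> V \<alpha> s) \<in> \<pi> s \<rightarrow>\<^sub>M prob_algebra borel"
  using law_act_measurable measurable_cong_sets[OF policy(2) refl] by blast

lemma real_distribution_law_pi:
  assumes "V \<in> borel_measurable borel"
  shows "real_distribution (law_pi \<pi> P r \<beta> V s)"
  unfolding law_pi_as_bind real_distribution_def real_distribution_axioms_def
  using prob_space_bind'[OF policy_in_prob_algebra law_act_measurable_policy[OF assms]]
    sets_bind'[OF policy_in_prob_algebra law_act_measurable_policy[OF assms]]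
  by simp

lemma emeasure_law_pi:
  assumes "V \<in> borel_measurable borel" "A \<in> sets borel"
  shows "emeasure (law_pi \<pi> P r \<beta> V s) A = (\<integral>\<^sup>+\<alpha>. emeasure (law_act P r \<beta> V \<alpha> s) A \<partial>\<pi> s)"
  unfolding law_pi_as_bind
  using policy_in_prob_algebra law_act_measurable_policy[OF assms(1)] assms(2)
  by (rule emeasure_bind_prob_algebra)

lemma law_pi_atMost_shift:
  assumes V: "V \<in> borel_measurable borel" and W: "W \<in> borel_measurable borel"
    and le: "\<And>s'. V s' \<le> W s' + c"
  shows "emeasure (law_pi \<pi> P r \<beta> W s) {..x} \<le> emeasure (law_pi \<pi> P r \<beta> V s) {..x + \<beta> * c}"
  unfolding emeasure_law_pi[OF V atMost_borel] emeasure_law_pi[OF W atMost_borel]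
proof (rule nn_integral_mono)
  fix \<alpha> assume "\<alpha> \<in> space (\<pi> s)"
  then have "\<alpha> \<in> space Am"
    using sets_eq_imp_space_eq[OF policy(2)] by simp
  then show "emeasure (law_act P r \<beta> W \<alpha> s) {..x} \<le> emeasure (law_act P r \<beta> V \<alpha> s) {..x + \<beta> * c}"
    using V W le by (rule law_act_atMost_shift)
qed

lemma T_pi_le_shift:
  assumes "V \<in> borel_measurable borel" "W \<in> borel_measurable borel" "\<And>s'. V s' \<le> W s' + c"
  shows "T_pi \<pi> P r \<beta> \<tau> V s \<le> T_pi \<pi> P r \<beta> \<tau> W s + \<beta> * c"
  unfolding T_pi_def using assms tau
  by (intro quantile_le_shift real_distribution_law_pi law_pi_atMost_shift)

lemma T_pi_contraction:
  assumes V: "V \<in> borel_measurable borel" and W: "W \<in> borel_measurable borel"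
    and close: "\<And>s'. \<bar>V s' - W s'\<bar> \<le> c"
  shows "\<bar>T_pi \<pi> P r \<beta> \<tau> V s - T_pi \<pi> P r \<beta> \<tau> W s\<bar> \<le> \<beta> * c"
proof -
  have le: "V s' \<le> W s' + c" "W s' \<le> V s' + c" for s'
    using close[of s'] by linarith+
  have "T_pi \<pi> P r \<beta> \<tau> V s \<le> T_pi \<pi> P r \<beta> \<tau> W s + \<beta> * c"
    by (rule T_pi_le_shift[OF V W le(1)])
  moreover have "T_pi \<pi> P r \<beta> \<tau> W s \<le> T_pi \<pi> P r \<beta> \<tau> V s + \<beta> * c"
    by (rule T_pi_le_shift[OF W V le(2)])
  ultimately show ?thesis
    by (simp add: abs_le_iff)
qed

end

theorem corollary1:
  fixes Am :: "'a measure"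
    and Acts :: "'s::polish_space \<Rightarrow> 'a set"
    and P :: "'a \<Rightarrow> 's \<Rightarrow> 's measure"
    and r :: "'a \<Rightarrow> 's \<Rightarrow> real"
    and \<pi> :: "'s \<Rightarrow> 'a measure"
    and \<beta> \<tau> :: real
  assumes beta: "0 < \<beta>" "\<beta> < 1"
    and tau: "0 < \<tau>" "\<tau> < 1"
    and acts: "\<And>s. Acts s \<subseteq> space Am" "\<And>s. Acts s \<noteq> {}"
    and kernel: "\<And>s. (\<lambda>\<alpha>. P \<alpha> s) \<in> measurable Am (prob_algebra borel)"
    and r_meas: "\<And>s. (\<lambda>\<alpha>. r \<alpha> s) \<in> borel_measurable Am"
    and r_bdd: "\<exists>M. \<forall>\<alpha> s. \<bar>r \<alpha> s\<bar> \<le> M"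
    and policy: "\<And>s. prob_space (\<pi> s)" "\<And>s. sets (\<pi> s) = sets Am"
    and policy_supp: "\<And>s. Acts s \<in> sets Am \<and> emeasure (\<pi> s) (Acts s) = 1"
    and wd_pi: "\<And>V. V \<in> bmeas \<Longrightarrow> T_pi \<pi> P r \<beta> \<tau> V \<in> bmeas"
    and wd_star: "\<And>V. V \<in> bmeas \<Longrightarrow> T_star Acts P r \<beta> \<tau> V \<in> bmeas"
    and max_attained: "\<And>V s. V \<in> bmeas \<Longrightarrow>
         \<exists>\<alpha>\<in>Acts s. \<forall>\<alpha>'\<in>Acts s.
            quantile (law_act P r \<beta> V \<alpha>' s) \<tau> \<le> quantile (law_act P r \<beta> V \<alpha> s) \<tau>"
  shows "(\<exists>v\<in>bmeas. T_pi \<pi> P r \<beta> \<tau> v = v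
             \<and> (\<forall>w\<in>bmeas. T_pi \<pi> P r \<beta> \<tau> w = w \<longrightarrow> w = v)
             \<and> (\<forall>V0\<in>bmeas. (\<lambda>k. supdist ((T_pi \<pi> P r \<beta> \<tau> ^^ k) V0) v) \<longlonglongrightarrow> 0))
       \<and> (\<exists>v\<in>bmeas. T_star Acts P r \<beta> \<tau> v = v
             \<and> (\<forall>w\<in>bmeas. T_star Acts P r \<beta> \<tau> w = w \<longrightarrow> w = v)
             \<and> (\<forall>V0\<in>bmeas. (\<lambda>k. supdist ((T_star Acts P r \<beta> \<tau> ^^ k) V0) v) \<longlonglongrightarrow> 0))"
proof -
  \<comment> \<open>\<open>max_attained\<close> only serves to keep the suprema in \<open>T_star\<close> finite.\<close>
  interpret quantile_mdp_policy Am P r \<beta> \<tau> \<pi>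
    using kernel r_meas beta tau policy
    by (intro quantile_mdp_policy.intro quantile_mdp.intro quantile_mdp_policy_axioms.intro) auto
  have measurable: "V \<in> borel_measurable borel" if "V \<in> bmeas" for V :: "'s \<Rightarrow> real"
    using that by (simp add: bmeas_def)
  have bdd: "bdd_above ((\<lambda>\<alpha>. quantile (law_act P r \<beta> V \<alpha> s) \<tau>) ` Acts s)"
    if "V \<in> bmeas" for V s
    using max_attained[OF that, of s] by (meson bdd_aboveI2)
  have "bmeas_contraction (T_pi \<pi> P r \<beta> \<tau>) \<beta>"
    using beta wd_pi T_pi_contraction measurable by unfold_locales auto
  moreover have "bmeas_contraction (T_star Acts P r \<beta> \<tau>) \<beta>"
    using beta wd_star T_star_contraction[where Acts = Acts, OF _ _ acts bdd bdd] measurable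
    by unfold_locales auto
  ultimately show ?thesis
    by (intro conjI bmeas_contraction.unique_fixpoint_and_convergence)
qed

end
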